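(* Let $G=(G_1,G_2,G_3)$ be a mean zero Gaussian vector whose covariance matrix $\Gamma$ is strictly positive definite and irreducible, with $\Gamma^{-1}$ an $M$-matrix, and suppose $\Gamma_{i,j}\le\Gamma_{i,i}\wedge\Gamma_{j,j}$ for all $i,j$. Let $D_i=\sum_k(\Gamma^{-1})_{i,k}$ and $\mathcal D=\{(i,j):D_iD_j<0\}$. Then the upper bound for the critical point of $G$ is non-zero: if $\mathcal D\neq\emptyset$, then $\inf_{(i,j)\in\mathcal D}\big((\Gamma^{-1})_{i,j}/(2D_iD_j)\big)^{1/2}>0$; equivalently, there is no $(i,j)\in\mathcal D$ with $(\Gamma^{-1})_{i,j}=0$. *)

theory Defs
  imports "HOL-Analysis.Analysis"
begin

definition pos_def_matrix :: "real^'n^'n \<Rightarrow> bool" where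
  "pos_def_matrix A \<longleftrightarrow> transpose A = A \<and> (\<forall>x. x \<noteq> 0 \<longrightarrow> x \<bullet> (A *v x) > 0)"

definition irreducible_matrix :: "real^'n^'n \<Rightarrow> bool" where
  "irreducible_matrix A \<longleftrightarrow>
     \<not> (\<exists>I. I \<noteq> {} \<and> I \<noteq> UNIV \<and> (\<forall>i\<in>I. \<forall>j. j \<notin> I \<longrightarrow> A $ i $ j = 0))"

definition M_matrix :: "real^'n^'n \<Rightarrow> bool" where
  "M_matrix A \<longleftrightarrow> (\<forall>i j. i \<noteq> j \<longrightarrow> A $ i $ j \<le> 0) \<and> invertible A \<and>
     (\<forall>i j. matrix_inv A $ i $ j \<ge> 0)"

end

theory Submission
  imports Defs
begin

text \<open>
  Write \<open>A = \<Gamma>\<^sup>-\<^sup>1\<close>. Since \<open>\<D>\<close> is finite, it suffices that every \<open>(i, j) \<in> \<D>\<close> has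
  \<open>A\<^sub>i\<^sub>j < 0\<close>; by the M-matrix sign condition this means \<open>A\<^sub>i\<^sub>j \<noteq> 0\<close>. Suppose \<open>A\<^sub>i\<^sub>j = 0\<close>
  and let \<open>k\<close> be the third index. The \<open>(i, k)\<close> entry of \<open>A \<Gamma> = 1\<close> reads
  \<open>A\<^sub>i\<^sub>i \<Gamma>\<^sub>i\<^sub>k + A\<^sub>i\<^sub>k \<Gamma>\<^sub>k\<^sub>k = 0\<close>, hence \<open>\<Gamma>\<^sub>k\<^sub>k D\<^sub>i = A\<^sub>i\<^sub>i (\<Gamma>\<^sub>k\<^sub>k - \<Gamma>\<^sub>i\<^sub>k) \<ge> 0\<close>, i.e. \<open>D\<^sub>i \<ge> 0\<close>.
  As \<open>A\<close> is symmetric the same argument gives \<open>D\<^sub>j \<ge> 0\<close>, contradicting \<open>D\<^sub>i D\<^sub>j < 0\<close>.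
\<close>

lemma INF_pos_finite:
  fixes f :: "'a \<Rightarrow> real"
  assumes "finite S" "S \<noteq> {}" "\<And>x. x \<in> S \<Longrightarrow> f x > 0"
  shows "(INF x\<in>S. f x) > 0"
  using assms by (simp add: cInf_eq_Min)

lemma UNIV_3_eq_distinct:
  fixes i j :: 3
  assumes "i \<noteq> j"
  obtains k where "k \<noteq> i" "k \<noteq> j" "UNIV = {i, j, k}"
proof -
  have "card {i, j} < card (UNIV :: 3 set)" using assms by simp
  then obtain k where k: "k \<notin> {i, j}" by (metis card_mono finite not_le subsetI)
  have "card {i, j, k} = card (UNIV :: 3 set)" using k assms by (auto simp: card_insert_if)
  then have "{i, j, k} = UNIV" by (metis card_subset_eq finite subset_UNIV)
  then show ?thesis using that k by auto
qed

lemma matrix_inv_left_right: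
  assumes "invertible (A :: 'a::semiring_1^'n^'n)"
  shows "matrix_inv A ** A = mat 1" "A ** matrix_inv A = mat 1"
  using someI_ex[OF assms[unfolded invertible_def]] by (auto simp: matrix_inv_def)

lemma transpose_matrix_inv_sym:
  fixes A :: "'a::comm_semiring_1^'n^'n"
  assumes "invertible A" "transpose A = A"
  shows "transpose (matrix_inv A) = matrix_inv A"
proof -
  have "transpose (matrix_inv A) ** A = mat 1"
    by (metis assms(2) matrix_inv_left_right(2)[OF assms(1)] matrix_transpose_mul transpose_mat)
  then show ?thesis
    by (metis matrix_inv_left_right(2)[OF assms(1)] matrix_mul_assoc matrix_mul_lid matrix_mul_rid)
qed

lemma pos_def_matrix_invertible:
  assumes "pos_def_matrix A"
  shows "invertible A"
proof -
  have "\<forall>x. A *v x = 0 \<longrightarrow> x = 0"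
    using assms unfolding pos_def_matrix_def by (metis inner_zero_right less_irrefl)
  then show ?thesis
    using matrix_left_invertible_ker invertible_left_inverse by blast
qed

lemma pos_def_matrix_diag_pos:
  assumes "pos_def_matrix A"
  shows "A $ k $ k > 0"
proof -
  have "axis k 1 \<bullet> (A *v axis k 1) > 0"
    using assms by (simp add: pos_def_matrix_def)
  then show ?thesis by (simp add: inner_axis' matrix_vector_mult_basis column_def)
qed

lemma pos_def_matrix_inv_diag_pos:
  assumes "pos_def_matrix A"
  shows "matrix_inv A $ i $ i > 0"
proof -
  define x where "x = matrix_inv A *v axis i 1"
  have Ax: "A *v x = axis i 1"
    using matrix_inv_left_right(2)[OF pos_def_matrix_invertible[OF assms]]
    by (simp add: x_def matrix_vector_mul_assoc)
  then have "x \<noteq> 0" by auto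
  then have "x \<bullet> (A *v x) > 0" using assms by (simp add: pos_def_matrix_def)
  moreover have "x \<bullet> (A *v x) = x $ i" by (simp add: Ax inner_axis)
  moreover have "x $ i = matrix_inv A $ i $ i"
    by (simp add: x_def matrix_vector_mult_basis column_def)
  ultimately show ?thesis by simp
qed

lemma inverse_row_sum_nonneg_if_entry_zero:
  fixes \<Gamma> :: "real^3^3"
  assumes pd: "pos_def_matrix \<Gamma>"
    and dominated: "\<And>i k. \<Gamma> $ i $ k \<le> \<Gamma> $ k $ k"
    and "i \<noteq> j" "matrix_inv \<Gamma> $ i $ j = 0"
  shows "(\<Sum>l\<in>UNIV. matrix_inv \<Gamma> $ i $ l) \<ge> 0"
proof -
  define A where "A = matrix_inv \<Gamma>"
  obtain k where k: "k \<noteq> i" "k \<noteq> j" "UNIV = {i, j, k}"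
    using UNIV_3_eq_distinct[OF \<open>i \<noteq> j\<close>] .
  have sum3: "(\<Sum>l\<in>UNIV. f l) = f i + f j + f k" for f :: "3 \<Rightarrow> real"
    using k \<open>i \<noteq> j\<close> by (simp only: k(3)) (simp add: ac_simps)
  have "(A ** \<Gamma>) $ i $ k = 0"
    using matrix_inv_left_right(1)[OF pos_def_matrix_invertible[OF pd]] k
    by (simp add: A_def mat_def)
  then have "A $ i $ i * \<Gamma> $ i $ k + A $ i $ k * \<Gamma> $ k $ k = 0"
    using assms(4) by (simp add: A_def matrix_matrix_mult_def sum3)
  then have "\<Gamma> $ k $ k * (\<Sum>l\<in>UNIV. A $ i $ l) = A $ i $ i * (\<Gamma> $ k $ k - \<Gamma> $ i $ k)"
    using assms(4) by (simp add: A_def sum3 algebra_simps)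
  also have "\<dots> \<ge> 0"
    using pos_def_matrix_inv_diag_pos[OF pd, of i] dominated[of i k] by (simp add: A_def)
  finally show ?thesis
    using pos_def_matrix_diag_pos[OF pd, of k] by (simp add: A_def zero_le_mult_iff)
qed

theorem corollary7p1:
  fixes \<Gamma> :: "real^3^3"
  assumes "pos_def_matrix \<Gamma>"
    and "irreducible_matrix \<Gamma>"
    and "M_matrix (matrix_inv \<Gamma>)"
    and "\<forall>i j. \<Gamma> $ i $ j \<le> min (\<Gamma> $ i $ i) (\<Gamma> $ j $ j)"
  defines "D \<equiv> (\<lambda>i. \<Sum>k\<in>UNIV. matrix_inv \<Gamma> $ i $ k)"
    and "\<D> \<equiv> {(i, j). (\<Sum>k\<in>UNIV. matrix_inv \<Gamma> $ i $ k) * (\<Sum>k\<in>UNIV. matrix_inv \<Gamma> $ j $ k) < 0}"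
  shows "\<D> \<noteq> {} \<longrightarrow>
    (INF p\<in>\<D>. sqrt (matrix_inv \<Gamma> $ fst p $ snd p / (2 * D (fst p) * D (snd p)))) > 0"
proof (intro impI INF_pos_finite)
  fix p assume "p \<in> \<D>"
  then obtain i j where p: "p = (i, j)" and neg: "D i * D j < 0"
    unfolding \<D>_def D_def by auto
  then have "i \<noteq> j" by (metis not_square_less_zero)
  have dominated: "\<And>i k. \<Gamma> $ i $ k \<le> \<Gamma> $ k $ k" using assms(4) by simp
  have "transpose (matrix_inv \<Gamma>) $ i $ j = matrix_inv \<Gamma> $ i $ j"
    using assms(1) by (simp add: transpose_matrix_inv_sym pos_def_matrix_invertible pos_def_matrix_def)
  then have sym: "matrix_inv \<Gamma> $ j $ i = matrix_inv \<Gamma> $ i $ j"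
    by (simp add: transpose_def)
  have "matrix_inv \<Gamma> $ i $ j \<noteq> 0"
  proof
    assume "matrix_inv \<Gamma> $ i $ j = 0"
    then have "D i \<ge> 0" "D j \<ge> 0"
      using inverse_row_sum_nonneg_if_entry_zero[OF assms(1) dominated, of i j]
        inverse_row_sum_nonneg_if_entry_zero[OF assms(1) dominated, of j i] \<open>i \<noteq> j\<close> sym
      by (auto simp: D_def)
    with neg show False by (simp add: mult_less_0_iff)
  qed
  moreover have "matrix_inv \<Gamma> $ i $ j \<le> 0"
    using assms(3) \<open>i \<noteq> j\<close> by (simp add: M_matrix_def)
  ultimately show "sqrt (matrix_inv \<Gamma> $ fst p $ snd p / (2 * D (fst p) * D (snd p))) > 0"
    using neg p by (simp add: divide_neg_neg mult.assoc)
qed simp_all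

end
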